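(* Let $X$ be a real-valued random variable and let $f,g:\mathbb{R}\to\mathbb{R}^+$ be bounded increasing functions. Then $$\operatorname{Cov}[f(X)g(X),\,g(X)]\;\geq\;\mathbb{E}[f(X)]\,\operatorname{Var}[g(X)].$$ *)

theory Defs
  imports "HOL-Probability.Probability"
begin

definition covariance :: "'a measure \<Rightarrow> ('a \<Rightarrow> real) \<Rightarrow> ('a \<Rightarrow> real) \<Rightarrow> real" where
  "covariance M U V =
     (\<integral>x. (U x - (\<integral>y. U y \<partial>M)) * (V x - (\<integral>y. V y \<partial>M)) \<partial>M)"

end

theory Submission
  imports Defs
begin

text \<open>
  Write \<open>\<mu>\<close> and \<open>c\<close> for the mean and the variance of \<open>g(X)\<close>. Then
  \<open>Cov[f(X)g(X), g(X)] - E[f(X)] c = E[f(X) p(X)]\<close> with \<open>p t = g t (g t - \<mu>) - c\<close>,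
  and \<open>E[p(X)] = 0\<close>. Since \<open>g\<close> is positive and increasing, \<open>p\<close> changes sign at most
  once, from negative to positive. Hence some threshold \<open>a\<close> separates the values of the
  increasing function \<open>f\<close> on \<open>{p < 0}\<close> from those on \<open>{p > 0}\<close>, so that
  \<open>(f - a) p \<ge> 0\<close> pointwise and \<open>E[f(X) p(X)] \<ge> a E[p(X)] = 0\<close>.
\<close>

lemma bounded_range_mult:
  fixes U V :: "'a \<Rightarrow> 'b::real_normed_algebra"
  assumes "bounded (range U)" and "bounded (range V)"
  shows "bounded (range (\<lambda>x. U x * V x))"
proof -
  obtain BU where BU: "\<And>x. norm (U x) \<le> BU"
    using assms(1) by (auto simp: bounded_iff)
  obtain BV where BV: "\<And>x. norm (V x) \<le> BV"
    using assms(2) by (auto simp: bounded_iff)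
  have "norm (U x * V x) \<le> BU * BV" for x
  proof -
    have "norm (U x * V x) \<le> norm (U x) * norm (V x)"
      by (rule norm_mult_ineq)
    also have "\<dots> \<le> BU * BV"
      using BU BV by (intro mult_mono) (auto intro: order_trans[OF norm_ge_zero])
    finally show ?thesis .
  qed
  then show ?thesis
    by (auto simp: bounded_iff)
qed

lemma (in finite_measure) integrable_bounded_range:
  fixes U :: "'a \<Rightarrow> real"
  assumes "U \<in> borel_measurable M" and "bounded (range U)"
  shows "integrable M U"
proof -
  obtain B where "\<And>x. norm (U x) \<le> B"
    using assms(2) by (auto simp: bounded_iff)
  then show ?thesis
    using assms(1) by (intro integrable_const_bound[where B = B]) auto
qed

lemma mono_threshold_separates_sign:
  fixes f p :: "'b::linorder \<Rightarrow> real"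
  assumes "mono f" and "bounded (range f)"
    and sign: "\<And>s t. s \<le> t \<Longrightarrow> p t < 0 \<Longrightarrow> p s \<le> 0"
  shows "\<exists>a. \<forall>t. 0 \<le> (f t - a) * p t"
proof (cases "\<exists>t. p t < 0")
  case False
  have "Inf (range f) \<le> f t" for t
    using assms(2) by (intro cInf_lower) (auto intro: bounded_imp_bdd_below)
  then have "\<forall>t. 0 \<le> (f t - Inf (range f)) * p t"
    using False by (simp add: not_less)
  then show ?thesis ..
next
  case True
  define a where "a = Sup (f ` {t. p t < 0})"
  have "0 \<le> (f t - a) * p t" for t
  proof (cases "p t < 0")
    case True
    have "bdd_above (f ` {t. p t < 0})"
      by (rule bdd_above_mono[OF bounded_imp_bdd_above[OF assms(2)]]) auto
    then have "f t \<le> a"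
      unfolding a_def using True by (intro cSup_upper) auto
    then show ?thesis
      using True by (simp add: mult_nonpos_nonpos)
  next
    case False
    show ?thesis
    proof (cases "p t = 0")
      case False
      with \<open>\<not> p t < 0\<close> have "p t > 0" by simp
      then have "s \<le> t" if "p s < 0" for s
        using sign[of t s] that by (meson linorder_le_cases not_le)
      then have "\<forall>s \<in> {s. p s < 0}. f s \<le> f t"
        using \<open>mono f\<close> by (auto intro: monoD)
      then have "a \<le> f t"
        unfolding a_def using \<open>\<exists>t. p t < 0\<close> by (intro cSup_least) auto
      then show ?thesis
        using \<open>p t > 0\<close> by simp
    qed simp
  qed
  then show ?thesis by blast
qed

lemma centered_square_sign_change:
  fixes g :: "'b::order \<Rightarrow> real"
  assumes "mono g" and "\<And>t. 0 \<le> g t" and "0 \<le> c"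
    and "s \<le> t" and "g t * (g t - m) - c < 0"
  shows "g s * (g s - m) - c \<le> 0"
proof (cases "g s \<le> m")
  case True
  then have "g s * (g s - m) \<le> 0"
    using assms(2) by (intro mult_nonneg_nonpos) auto
  then show ?thesis
    using assms(3) by linarith
next
  case False
  have "g s \<le> g t"
    using assms(1,4) by (simp add: mono_def)
  then have "g s * (g s - m) \<le> g t * (g t - m)"
    using False assms(2) by (intro mult_mono) auto
  then show ?thesis
    using assms(5) by linarith
qed

lemma integral_mult_ge_of_threshold:
  fixes F P :: "'a \<Rightarrow> real"
  assumes "integrable M (\<lambda>x. F x * P x)" and "integrable M P"
    and "\<And>x. 0 \<le> (F x - a) * P x"
  shows "a * (\<integral>x. P x \<partial>M) \<le> (\<integral>x. F x * P x \<partial>M)"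
proof -
  have "0 \<le> (\<integral>x. (F x - a) * P x \<partial>M)"
    using assms(3) by simp
  also have "\<dots> = (\<integral>x. F x * P x \<partial>M) - a * (\<integral>x. P x \<partial>M)"
    using assms(1,2) by (simp add: left_diff_distrib)
  finally show ?thesis by simp
qed

lemma (in prob_space) covariance_eq_expectation_centered:
  fixes U V :: "'a \<Rightarrow> real"
  assumes "integrable M U" and "integrable M V" and "integrable M (\<lambda>x. U x * V x)"
  shows "covariance M U V = expectation (\<lambda>x. U x * (V x - expectation V))"
proof -
  have "covariance M U V
      = expectation (\<lambda>x. U x * V x - U x * expectation V - expectation U * (V x - expectation V))"
    unfolding covariance_def by (simp add: algebra_simps)
  also have "\<dots> = expectation (\<lambda>x. U x * (V x - expectation V))"
    using assms by (simp add: prob_space right_diff_distrib)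
  finally show ?thesis .
qed

lemma (in prob_space) variance_eq_covariance:
  "variance V = covariance M V V"
  by (simp add: covariance_def power2_eq_square)

lemma (in prob_space) expectation_mult_nonneg_of_sign_change:
  fixes X :: "'a \<Rightarrow> real" and f p :: "real \<Rightarrow> real"
  assumes [measurable]: "X \<in> borel_measurable M" "p \<in> borel_measurable borel"
    and "mono f" and "bounded (range f)" and "bounded (range p)"
    and sign: "\<And>s t. s \<le> t \<Longrightarrow> p t < 0 \<Longrightarrow> p s \<le> 0"
    and "expectation (\<lambda>x. p (X x)) = 0"
  shows "0 \<le> expectation (\<lambda>x. f (X x) * p (X x))"
proof -
  have [measurable]: "f \<in> borel_measurable borel"
    using \<open>mono f\<close> by (rule borel_measurable_mono)
  have "bounded (range (\<lambda>x. f (X x)))" "bounded (range (\<lambda>x. p (X x)))"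
    using assms(4,5) by (auto intro: bounded_subset)
  then have "integrable M (\<lambda>x. f (X x) * p (X x))" "integrable M (\<lambda>x. p (X x))"
    by (intro integrable_bounded_range bounded_range_mult; measurable)+
  moreover obtain a where "\<And>t. 0 \<le> (f t - a) * p t"
    using mono_threshold_separates_sign[OF assms(3,4), of p] sign by blast
  ultimately have "a * expectation (\<lambda>x. p (X x)) \<le> expectation (\<lambda>x. f (X x) * p (X x))"
    by (intro integral_mult_ge_of_threshold)
  with assms(7) show ?thesis
    by simp
qed

lemma (in prob_space) covariance_mult_minus_variance:
  fixes F G :: "'a \<Rightarrow> real"
  assumes [measurable]: "F \<in> borel_measurable M" "G \<in> borel_measurable M"
    and "bounded (range F)" and "bounded (range G)"
  shows "expectation (\<lambda>x. G x * (G x - expectation G) - variance G) = 0"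
    and "covariance M (\<lambda>x. F x * G x) G - expectation F * variance G
           = expectation (\<lambda>x. F x * (G x * (G x - expectation G) - variance G))"
proof -
  have iF: "integrable M F" and iG: "integrable M G"
    and iFG: "integrable M (\<lambda>x. F x * G x)" and iGG: "integrable M (\<lambda>x. G x * G x)"
    and iFGG: "integrable M (\<lambda>x. F x * G x * G x)"
    using assms(3,4) by (intro integrable_bounded_range bounded_range_mult; measurable)+
  have var: "variance G = expectation (\<lambda>x. G x * (G x - expectation G))"
    unfolding variance_eq_covariance by (rule covariance_eq_expectation_centered[OF iG iG iGG])
  show "expectation (\<lambda>x. G x * (G x - expectation G) - variance G) = 0"
    using iG iGG by (simp add: var prob_space right_diff_distrib)
  have iFGc: "integrable M (\<lambda>x. F x * G x * (G x - expectation G))"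
    using iFG iFGG by (simp add: right_diff_distrib)
  have "expectation (\<lambda>x. F x * (G x * (G x - expectation G) - variance G))
      = expectation (\<lambda>x. F x * G x * (G x - expectation G) - variance G * F x)"
    by (rule Bochner_Integration.integral_cong) (simp_all add: algebra_simps)
  also have "\<dots> = expectation (\<lambda>x. F x * G x * (G x - expectation G)) - variance G * expectation F"
    using iFGc iF by simp
  also have "expectation (\<lambda>x. F x * G x * (G x - expectation G)) = covariance M (\<lambda>x. F x * G x) G"
    using iFG iG iFGG by (intro covariance_eq_expectation_centered[symmetric]) auto
  finally show "covariance M (\<lambda>x. F x * G x) G - expectation F * variance G
      = expectation (\<lambda>x. F x * (G x * (G x - expectation G) - variance G))"
    by (simp add: mult.commute)
qed

theorem lemma4p14:
  fixes M :: "'a measure" and X :: "'a \<Rightarrow> real" and f g :: "real \<Rightarrow> real"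
  assumes "prob_space M"
    and "X \<in> borel_measurable M"
    and "\<And>t. f t > 0" and "\<And>t. g t > 0"
    and "bounded (range f)" and "bounded (range g)"
    and "mono f" and "mono g"
  shows "covariance M (\<lambda>x. f (X x) * g (X x)) (\<lambda>x. g (X x))
           \<ge> prob_space.expectation M (\<lambda>x. f (X x)) * prob_space.variance M (\<lambda>x. g (X x))"
proof -
  interpret prob_space M by fact
  note [measurable] = assms(2) borel_measurable_mono[OF assms(7)] borel_measurable_mono[OF assms(8)]
  define \<mu> where "\<mu> = expectation (\<lambda>x. g (X x))"
  define c where "c = variance (\<lambda>x. g (X x))"
  define p where "p t = g t * (g t - \<mu>) - c" for t
  have meas: "(\<lambda>x. f (X x)) \<in> borel_measurable M" "(\<lambda>x. g (X x)) \<in> borel_measurable M"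
    by measurable
  have bdd: "bounded (range (\<lambda>x. f (X x)))" "bounded (range (\<lambda>x. g (X x)))"
    using assms(5,6) by (auto intro: bounded_subset)
  have mean_p: "expectation (\<lambda>x. p (X x)) = 0"
    using covariance_mult_minus_variance(1)[OF meas bdd] unfolding p_def \<mu>_def c_def .
  have cov: "covariance M (\<lambda>x. f (X x) * g (X x)) (\<lambda>x. g (X x)) - expectation (\<lambda>x. f (X x)) * c
      = expectation (\<lambda>x. f (X x) * p (X x))"
    using covariance_mult_minus_variance(2)[OF meas bdd] unfolding p_def \<mu>_def c_def .
  have "p \<in> borel_measurable borel"
    unfolding p_def[abs_def] by measurable
  moreover have "bounded (range p)"
    unfolding p_def using assms(6) by (intro bounded_minus_comp bounded_range_mult) auto
  moreover have "p s \<le> 0" if "s \<le> t" and "p t < 0" for s t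
    using centered_square_sign_change[OF assms(8) less_imp_le[OF assms(4)] variance_positive
        that[unfolded p_def c_def]]
    unfolding p_def c_def .
  ultimately have "0 \<le> expectation (\<lambda>x. f (X x) * p (X x))"
    using assms(2,5,7) mean_p by (intro expectation_mult_nonneg_of_sign_change)
  with cov show ?thesis
    by (simp add: c_def)
qed

end
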